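(* In the big-action setting below, assume $n\ge2$ and that for all $i$ and all $y\in V$, $f_i(X+y)-f_i(X)\in\wp(k[X])$, so that $f_i(X)\equiv XS_i(X)+c_iX\bmod\wp(k[X])$ with $c_i\in k$ and $S_i(X)=\sum_{j=0}^{s_i}a_{i,j}X^{p^j}$ additive, $s_i\ge1$, $a_{i,s_i}\ne0$. Assume moreover $v=2s_n$. Then $s_1=\dots=s_n=:s$ and $V=Z(\mathrm{Ad}_{f_1})$. Furthermore there exist a divisor $d$ of $s$ and elements $\gamma_2,\dots,\gamma_n\in\mathbb F_{p^d}\setminus\mathbb F_p$ such that, writing $S_1(X)=\sum_{j=0}^sa_jX^{p^j}$, one has $a_j=0$ whenever $d\nmid j$ (i.e. $S_1=\sum_{j=0}^{s/d}a_{jd}X^{p^{jd}}$), and $S_i=\gamma_iS_1$ for all $i\in\{2,\dots,n\}$; moreover $1,\gamma_2,\dots,\gamma_n$ are linearly independent over $\mathbb F_p$. In particular $s\ge2$.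
   Context: Big-action setting. Let $k$ be an algebraically closed field of characteristic $p>0$, $C$ a connected nonsingular projective curve over $k$ of genus $g\ge 2$, and $G$ a finite $p$-subgroup of $\mathrm{Aut}_k(C)$ with $|G|/g>2p/(p-1)$ (a "big action" $(C,G)$). It is known that there is a point $\infty\in C$ such that $G$ equals its own first (wild) ramification group at $\infty$, that $\infty$ is the only ramification point of $C\to C/G\cong\mathbb P^1_k$, that the second lower ramification group $G_2$ of $G$ at $\infty$ is a nontrivial proper subgroup of $G$ equal to the commutator subgroup $D(G)$, and that $C/G_2\cong\mathbb P^1_k$. Assume $G_2\cong(\mathbb Z/p\mathbb Z)^n$ with $n\ge1$. Put $L=k(C)$ and write $L^{G_2}=k(X)$, where $X$ is a coordinate on $C/G_2$ with pole at the image of $\infty$; then $G/G_2$ acts on $k(X)$ by translations $X\mapsto X+y$, $y$ ranging over an $\mathbb F_p$-subspace $V\subset k$ of dimension $v$, giving an exact sequence $0\to G_2\to G\to V\to 0$, $\sigma\mapsto\sigma(X)-X$. Let $\wp(Z)=Z^p-Z$. A polynomial in $k[X]$ is called reduced if it is a $k$-linear combination of monomials $X^j$ with $p\nmid j$; every $f\in k[X]$ is congruent modulo $\wp(k[X])$ to a unique reduced polynomial. Let $A=(\wp(L)\cap k[X])/\wp(k[X])$, an $n$-dimensional $\mathbb F_p$-vector space, and for $\bar f\in A$ let $\deg\bar f=\min\{\deg(f+\wp(P)):P\in k[X]\}$. Fix an $\mathbb F_p$-basis $\bar f_1,\dots,\bar f_n$ of $A$ with $m_i:=\deg\bar f_i$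 such that (a) $p\nmid m_i$, (b) $m_1\le\dots\le m_n$, (c) for all $(\lambda_1,\dots,\lambda_n)\in\mathbb F_p^n\setminus\{0\}$, $\deg(\sum_i\lambda_i\bar f_i)=\max_i\deg(\lambda_i\bar f_i)$. Let $f_i\in k[X]$ be the reduced representative of $\bar f_i$ (so $\deg f_i=m_i$); then $L=k(X,W_1,\dots,W_n)$ with $W_i^p-W_i=f_i(X)$. Palindromic polynomial: for $f(X)=XS(X)+cX$ with $S(X)=\sum_{j=0}^{s}a_jX^{p^j}$, $s\ge1$, $a_s\ne0$, define the additive polynomial $\mathrm{Ad}_f(X)=\frac1{a_s}\sum_{j=0}^{s}(a_j^{p^s}X^{p^{s+j}}+a_j^{p^{s-j}}X^{p^{s-j}})$, and let $Z(\mathrm{Ad}_f)\subset k$ be its set of roots. $\mathbb F_{p^d}$ denotes the subfield of $k$ with $p^d$ elements. *)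

theory Defs
  imports "HOL-Computational_Algebra.Polynomial"
begin

definition alg_closed :: "'k::field itself \<Rightarrow> bool" where
  "alg_closed _ \<longleftrightarrow> (\<forall>q :: 'k poly. degree q > 0 \<longrightarrow> (\<exists>x. poly q x = 0))"

definition wp :: "nat \<Rightarrow> 'k::field poly \<Rightarrow> 'k poly" where
  "wp p P = P ^ p - P"

definition reduced :: "nat \<Rightarrow> 'k::field poly \<Rightarrow> bool" where
  "reduced p f \<longleftrightarrow> (\<forall>j. p dvd j \<longrightarrow> coeff f j = 0)"

definition deg_cls :: "nat \<Rightarrow> 'k::field poly \<Rightarrow> nat" where
  "deg_cls p f = (LEAST d. \<exists>P. degree (f + wp p P) = d)"

definition add_poly :: "nat \<Rightarrow> (nat \<Rightarrow> 'k::field) \<Rightarrow> nat \<Rightarrow> 'k poly" where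
  "add_poly p a s = (\<Sum>j\<le>s. monom (a j) (p ^ j))"

text \<open>The palindromic polynomial Ad_f for f = X S(X) + c X, S = add_poly p a s.\<close>
definition Ad :: "nat \<Rightarrow> (nat \<Rightarrow> 'k::field) \<Rightarrow> nat \<Rightarrow> 'k poly" where
  "Ad p a s = smult (1 / a s)
     (\<Sum>j\<le>s. monom (a j ^ (p ^ s)) (p ^ (s + j)) + monom (a j ^ (p ^ (s - j))) (p ^ (s - j)))"

definition Fq :: "nat \<Rightarrow> 'k::field set" where
  "Fq q = {x. x ^ q = x}"

end

theory Submission
  imports Defs "HOL-Number_Theory.Cong"
begin

(* Translating f_i by y changes
   it by y S_i(X) + S_i(y) X + const, a polynomial of degree at most p^s_i.  The functional
   tau(h) = sum_{j <= s} h_{p^j}^(p^(s-j)) telescopes to -P_{p^s} on wp(P), so it vanishes on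
   every element of wp(k[X]) of degree at most p^s; on the translation difference it equals
   a_s Ad_f(y).  Hence V lies in the root set of every Ad_{f_i}, which has at most p^(2 s_i)
   elements.  As |V| = p^(2 s_n) and (b) gives s_i <= s_n, all s_i agree, V is the whole root
   set, and the Ad_{f_i} coincide: they have degree <= |V|, vanish on V and have coefficient 1
   at X.

   Comparing coefficients in Ad_{f_i} = Ad_{f_1} gives S_i = gamma_i S_1 with
   gamma_i^(p^(s-j)) = gamma_i whenever a_{1,j} <> 0, so every gamma_i lies in F_{p^d} for d the
   gcd of s and these s - j.  If sum lambda_i gamma_i = 0, then sum lambda_i f_i has degree
   <= 1, which (c) forbids unless all lambda_i vanish; in particular gamma_i is not in F_p for
   i >= 2, so d >= 2. *)

section \<open>Frobenius and the subfields \<open>Fq\<close>\<close>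

lemma frobenius_add:
  fixes x y :: "'a::comm_semiring_1"
  assumes "CHAR('a) = p" "prime p"
  shows "(x + y) ^ (p ^ m) = x ^ (p ^ m) + y ^ (p ^ m)"
  using freshmans_dream'[of "p ^ m" m x y] assms by simp

lemma frobenius_diff:
  fixes x y :: "'a::comm_ring_1"
  assumes "CHAR('a) = p" "prime p"
  shows "(x - y) ^ (p ^ m) = x ^ (p ^ m) - y ^ (p ^ m)"
  using frobenius_add[OF assms, of "x - y" y m] by (simp add: algebra_simps)

lemma frobenius_sum:
  fixes f :: "'b \<Rightarrow> 'a::comm_semiring_1"
  assumes "CHAR('a) = p" "prime p"
  shows "(sum f A) ^ (p ^ m) = (\<Sum>i\<in>A. f i ^ (p ^ m))"
  using freshmans_dream_sum'[of "p ^ m" m f A] assms by simp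

lemma frobenius_inject:
  fixes x y :: "'a::idom"
  assumes "CHAR('a) = p" "prime p"
  shows "x ^ (p ^ m) = y ^ (p ^ m) \<longleftrightarrow> x = y"
  using frobenius_diff[OF assms, of x y m] by (metis eq_iff_diff_eq_0 power_eq_0_iff)

lemma Fq_power_mult:
  assumes "x \<in> Fq (p ^ a)"
  shows "x \<in> Fq (p ^ (a * u))"
proof (induction u)
  case (Suc u)
  have "x ^ p ^ (a * Suc u) = (x ^ p ^ (a * u)) ^ p ^ a"
    by (simp add: power_add mult.commute flip: power_mult)
  with Suc assms show ?case
    by (simp add: Fq_def)
qed (simp add: Fq_def)

lemma Fq_gcd:
  assumes "x \<in> Fq (p ^ a)" "x \<in> Fq (p ^ b)"
  shows "x \<in> Fq (p ^ gcd a b)"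
proof (cases "a = 0")
  case False
  obtain u w where uw: "a * u = b * w + gcd a b"
    using bezout_nat[OF False] by blast
  have "x = x ^ p ^ (a * u)"
    using Fq_power_mult[OF assms(1)] by (simp add: Fq_def)
  also have "\<dots> = (x ^ p ^ (b * w)) ^ p ^ gcd a b"
    unfolding uw by (simp add: power_add power_mult)
  also have "\<dots> = x ^ p ^ gcd a b"
    using Fq_power_mult[OF assms(2)] by (simp add: Fq_def)
  finally show ?thesis
    by (simp add: Fq_def)
qed (use assms in simp)

lemma Fq_Gcd:
  assumes "finite A" "\<And>m. m \<in> A \<Longrightarrow> x \<in> Fq (p ^ m)"
  shows "x \<in> Fq (p ^ Gcd A)"
  using assms
proof (induction A rule: finite_induct)
  case empty
  then show ?case
    by (simp add: Fq_def)
qed (simp add: Fq_gcd)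

lemma exists_subfield_dividing_support:
  fixes \<Gamma> :: "'k::field set" and b :: "nat \<Rightarrow> 'k"
  assumes "s \<ge> 1" and "\<Gamma> \<subseteq> Fq (p ^ s)" and "\<And>j. j \<le> s \<Longrightarrow> b j \<noteq> 0 \<Longrightarrow> \<Gamma> \<subseteq> Fq (p ^ (s - j))"
  shows "\<exists>d>0. d dvd s \<and> \<Gamma> \<subseteq> Fq (p ^ d) \<and> (\<forall>j\<le>s. \<not> d dvd j \<longrightarrow> b j = 0)"
proof -
  define E where "E = insert s ((\<lambda>j. s - j) ` {j. j \<le> s \<and> b j \<noteq> 0})"
  define d where "d = Gcd E"
  have "d dvd s"
    by (simp add: d_def E_def)
  moreover have "d > 0"
    using \<open>d dvd s\<close> assms(1) by (intro gr0I) auto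
  moreover have "finite E"
    by (simp add: E_def)
  then have "\<Gamma> \<subseteq> Fq (p ^ d)"
    unfolding d_def
  proof (intro subsetI Fq_Gcd)
    show "x \<in> Fq (p ^ m)" if "x \<in> \<Gamma>" "m \<in> E" for x m
      using that assms(2,3) by (auto simp: E_def)
  qed
  moreover have "b j = 0" if "j \<le> s" "\<not> d dvd j" for j
  proof (rule ccontr)
    assume "b j \<noteq> 0"
    then have "d dvd s - j"
      unfolding d_def E_def using that(1) by (intro Gcd_dvd) auto
    with \<open>d dvd s\<close> that show False
      by (metis diff_diff_cancel dvd_diff_nat)
  qed
  ultimately show ?thesis
    by blast
qed

lemma Fq_prime:
  fixes p :: nat
  assumes ch: "CHAR('k::field) = p" and pr: "prime p"
  shows "Fq p = (of_nat ` {..<p} :: 'k set)"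
proof (rule card_seteq[symmetric])
  define q :: "'k poly" where "q = monom 1 p - monom 1 1"
  have p1: "p > 1"
    using pr prime_gt_1_nat by blast
  have deg_q: "degree q = p"
    unfolding q_def diff_conv_add_uminus using p1
    by (subst degree_add_eq_left) (auto simp: degree_monom_eq)
  then have "q \<noteq> 0"
    using p1 by auto
  moreover have "Fq p = {x. poly q x = 0}"
    by (auto simp: q_def Fq_def poly_monom)
  ultimately have "finite (Fq p :: 'k set)" "card (Fq p :: 'k set) \<le> p"
    using poly_roots_finite[of q] card_poly_roots_bound[of q] deg_q by simp_all
  moreover have "inj_on (of_nat :: nat \<Rightarrow> 'k) {..<p}"
    by (rule inj_onI) (simp add: of_nat_eq_iff_cong_CHAR ch cong_less_modulus_unique_nat)
  ultimately show "finite (Fq p :: 'k set)" "card (Fq p :: 'k set) \<le> card (of_nat ` {..<p} :: 'k set)"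
    by (simp_all add: card_image)
  show "of_nat ` {..<p} \<subseteq> (Fq p :: 'k set)"
  proof safe
    fix m :: nat
    have "(of_nat m :: 'k) ^ p = of_nat m"
      by (induction m) (simp_all add: freshmans_dream ch pr prime_gt_0_nat)
    then show "of_nat m \<in> (Fq p :: 'k set)"
      by (simp add: Fq_def)
  qed
qed

section \<open>Additive polynomials\<close>

lemma coeff_add_poly: "coeff (add_poly p a s) m = (\<Sum>j\<le>s. if m = p ^ j then a j else 0)"
  unfolding add_poly_def by (auto simp: coeff_sum intro!: sum.cong)

lemma coeff_add_poly_power:
  assumes "p > 1"
  shows "coeff (add_poly p a s) (p ^ j) = (if j \<le> s then a j else 0)"
proof -
  have "(\<Sum>i\<le>s. if p ^ j = p ^ i then a i else 0) = (\<Sum>i\<le>s. if i = j then a i else 0)"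
    using assms by (intro sum.cong) auto
  then show ?thesis
    by (simp add: coeff_add_poly)
qed

lemma degree_add_poly_le:
  assumes "p > 0"
  shows "degree (add_poly p a s) \<le> p ^ s"
  unfolding add_poly_def
proof (intro degree_sum_le)
  fix j assume "j \<in> {..s}"
  then have "p ^ j \<le> p ^ s"
    using assms by (simp add: power_increasing)
  then show "degree (monom (a j) (p ^ j)) \<le> p ^ s"
    using degree_monom_le order_trans by blast
qed simp

lemma poly_add_poly: "poly (add_poly p a s) y = (\<Sum>j\<le>s. a j * y ^ (p ^ j))"
  unfolding add_poly_def by (simp add: poly_sum poly_monom)

lemma add_poly_cong: "(\<And>j. j \<le> s \<Longrightarrow> a j = b j) \<Longrightarrow> add_poly p a s = add_poly p b s"
  unfolding add_poly_def by (intro sum.cong) auto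

lemma smult_add_poly: "smult c (add_poly p a s) = add_poly p (\<lambda>j. c * a j) s"
  unfolding add_poly_def by (induction s) (simp_all add: smult_add_right smult_monom)

lemma degree_add_poly:
  assumes "p > 1" and "a s \<noteq> 0"
  shows "degree (add_poly p a s) = p ^ s"
  using assms degree_add_poly_le[of p a s] le_degree[of "add_poly p a s" "p ^ s"]
    coeff_add_poly_power[of p a s s]
  by simp

lemma degree_shifted_add_poly:
  assumes "p > 1" and "a s \<noteq> 0"
  shows "degree ([:0, 1:] * add_poly p a s + [:0, c:]) = p ^ s + 1"
proof -
  have "add_poly p a s \<noteq> 0"
    using assms by (metis coeff_0 coeff_add_poly_power order.refl)
  then have "degree ([:0, 1:] * add_poly p a s) = p ^ s + 1"
    using degree_add_poly[where a = a, OF assms] by simp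
  moreover have "degree [:0, c:] < p ^ s + 1"
    using assms(1) by simp
  ultimately show ?thesis
    by (metis degree_add_eq_left)
qed

lemma pcompose_monom: "pcompose (monom c n) q = smult c (q ^ n)"
  by (induction n) (auto simp: monom_0 monom_Suc pcompose_pCons)

lemma pcompose_add_poly_linear:
  fixes y :: "'k::field"
  assumes "CHAR('k) = p" "prime p"
  shows "pcompose (add_poly p a s) [:y, 1:] = add_poly p a s + [:poly (add_poly p a s) y:]"
proof -
  have X: "[:y, 1:] = monom 1 1 + [:y:]"
    by (simp add: monom_Suc monom_0 one_pCons)
  have "pcompose (monom c (p ^ j)) [:y, 1:] = monom c (p ^ j) + [:c * y ^ (p ^ j):]" for c j
    using frobenius_add[of p "monom 1 1 :: 'k poly" "[:y:]" j] assms
    by (simp add: pcompose_monom X monom_power poly_const_pow smult_add_right smult_monom)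
  then show ?thesis
    unfolding add_poly_def poly_add_poly[unfolded add_poly_def]
    by (simp add: pcompose_sum sum.distrib sum_to_poly)
qed

section \<open>Artin--Schreier classes\<close>

lemma coeff_power_char:
  fixes P :: "'k::comm_semiring_1 poly"
  assumes ch: "CHAR('k) = p" and pr: "prime p"
  shows "coeff (P ^ p) m = (if p dvd m then coeff P (m div p) ^ p else 0)"
proof -
  have "P ^ p = (\<Sum>k\<le>degree P. monom (coeff P k) k) ^ (p ^ 1)"
    by (simp add: poly_as_sum_of_monoms)
  also have "\<dots> = (\<Sum>k\<le>degree P. monom (coeff P k ^ p) (k * p))"
    using frobenius_sum[of p "\<lambda>k. monom (coeff P k) k" "{..degree P}" 1] assms
    by (simp add: monom_power)
  finally have "coeff (P ^ p) m = (\<Sum>k\<le>degree P. if m = k * p then coeff P k ^ p else 0)"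
    by (simp add: coeff_sum eq_commute)
  also have "\<dots> = (if p dvd m then coeff P (m div p) ^ p else 0)"
    using pr prime_gt_0_nat[OF pr]
    by (auto simp: coeff_eq_0 zero_power intro!: sum.neutral)
  finally show ?thesis .
qed

lemma coeff_wp_power:
  fixes P :: "'k::field poly"
  assumes ch: "CHAR('k) = p" and pr: "prime p"
  shows "coeff (wp p P) (p ^ j) = (if j = 0 then 0 else coeff P (p ^ (j - 1)) ^ p) - coeff P (p ^ j)"
  using prime_gt_1_nat[OF pr]
  by (cases j) (simp_all add: wp_def coeff_power_char[OF ch pr])

definition tau :: "nat \<Rightarrow> nat \<Rightarrow> 'k::field poly \<Rightarrow> 'k" where
  "tau p s h = (\<Sum>j\<le>s. coeff h (p ^ j) ^ (p ^ (s - j)))"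

lemma tau_wp:
  fixes P :: "'k::field poly"
  assumes ch: "CHAR('k) = p" and pr: "prime p"
  shows "tau p s (wp p P) = - coeff P (p ^ s)"
proof -
  define W where "W j = (case j of 0 \<Rightarrow> 0 | Suc i \<Rightarrow> coeff P (p ^ i) ^ (p ^ (s - i)))" for j
  have "coeff (wp p P) (p ^ j) ^ (p ^ (s - j)) = W j - W (Suc j)" if "j \<le> s" for j
  proof -
    have "(if j = 0 then 0 else coeff P (p ^ (j - 1)) ^ p) ^ (p ^ (s - j)) = W j"
    proof (cases j)
      case (Suc i)
      with that have "s - i = Suc (s - j)"
        by simp
      then have "p * p ^ (s - j) = p ^ (s - i)"
        by simp
      with Suc show ?thesis
        by (simp add: W_def flip: power_mult)
    qed (simp add: W_def prime_gt_0_nat[OF pr])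
    then show ?thesis
      by (simp add: coeff_wp_power[OF ch pr] frobenius_diff[OF ch pr] W_def)
  qed
  then have "tau p s (wp p P) = (\<Sum>j\<le>s. W j - W (Suc j))"
    unfolding tau_def by (intro sum.cong) auto
  also have "\<dots> = - coeff P (p ^ s)"
    by (subst sum_telescope) (simp add: W_def)
  finally show ?thesis .
qed

lemma degree_wp:
  fixes P :: "'k::field poly"
  assumes "prime p" and "degree P \<noteq> 0"
  shows "degree (wp p P) = p * degree P"
proof -
  have "degree (P ^ p) = p * degree P"
    using assms(2) degree_power_eq[of P p] by fastforce
  moreover have "degree P < p * degree P"
    using assms prime_gt_1_nat[OF assms(1)] by simp
  ultimately show ?thesis
    unfolding wp_def diff_conv_add_uminus by (subst degree_add_eq_left) auto
qed

lemma degree_less_if_degree_wp_le: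
  fixes P :: "'k::field poly"
  assumes pr: "prime p" and "s \<ge> 1" and "degree (wp p P) \<le> p ^ s"
  shows "degree P < p ^ s"
proof (cases "degree P = 0")
  case False
  have p1: "p > 1"
    using prime_gt_1_nat[OF pr] .
  have "p * degree P \<le> p * p ^ (s - 1)"
    using assms degree_wp[OF pr False] by (simp flip: power_Suc)
  then have "degree P \<le> p ^ (s - 1)"
    using p1 by simp
  also have "\<dots> < p ^ s"
    using p1 assms(2) by (simp add: power_strict_increasing)
  finally show ?thesis .
qed (use pr prime_gt_0_nat in simp)

lemma degree_le_degree_add_wp:
  fixes g P :: "'k::field poly"
  assumes pr: "prime p" and red: "reduced p g"
  shows "degree g \<le> degree (g + wp p P)"
proof (cases "degree P = 0")
  case True
  then obtain b where "P = [:b:]"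
    by (rule degree_eq_zeroE)
  then have "degree (wp p P) = 0"
    by (simp add: wp_def poly_const_pow)
  then show ?thesis
    by (cases "degree g = 0") (simp_all add: degree_add_eq_left)
next
  case False
  have "coeff g (p * degree P) = 0"
    using red by (simp add: reduced_def)
  then have "degree g \<noteq> p * degree P \<or> g = 0"
    by (metis leading_coeff_0_iff)
  then show ?thesis
    using degree_wp[OF pr False]
    by (cases "degree g < p * degree P") (auto simp: degree_add_eq_left degree_add_eq_right)
qed

lemma reduced_smult: "reduced p g \<Longrightarrow> reduced p (smult x g)"
  by (simp add: reduced_def)

lemma deg_cls_le_degree:
  fixes g :: "'k::field poly"
  assumes "prime p"
  shows "deg_cls p g \<le> degree g"
  unfolding deg_cls_def
  using assms by (intro Least_le exI[of _ 0]) (simp add: wp_def prime_gt_0_nat zero_power)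

lemma deg_cls_reduced:
  fixes g :: "'k::field poly"
  assumes "prime p" and "reduced p g"
  shows "deg_cls p g = degree g"
  unfolding deg_cls_def
proof (rule Least_equality)
  show "\<exists>P. degree (g + wp p P) = degree g"
    using assms(1) by (intro exI[of _ 0]) (simp add: wp_def prime_gt_0_nat zero_power)
qed (use degree_le_degree_add_wp[OF assms] in blast)

section \<open>The palindromic polynomial\<close>

lemma poly_Ad:
  assumes "a s \<noteq> 0"
  shows "a s * poly (Ad p a s) y =
    (\<Sum>j\<le>s. a j ^ (p ^ s) * y ^ (p ^ (s + j)) + a j ^ (p ^ (s - j)) * y ^ (p ^ (s - j)))"
  using assms unfolding Ad_def by (simp add: poly_sum poly_monom)

lemma translate_difference_formula:
  fixes y c :: "'k::field" and S :: "'k poly"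
  assumes "pcompose S [:y, 1:] = S + [:poly S y:]"
  shows "pcompose ([:0, 1:] * S + [:0, c:]) [:y, 1:] - ([:0, 1:] * S + [:0, c:])
       = smult y S + [:0, poly S y:] + [:y * poly S y + c * y:]"
  using assms
  by (intro poly_eqI) (simp add: pcompose_add pcompose_mult pcompose_pCons coeff_pCons algebra_simps
      split: nat.split)

lemma tau_translate_difference:
  fixes y e :: "'k::field"
  assumes ch: "CHAR('k) = p" and pr: "prime p" and "a s \<noteq> 0"
  defines "S \<equiv> add_poly p a s"
  shows "tau p s (smult y S + [:0, poly S y:] + [:e:]) = a s * poly (Ad p a s) y"
proof -
  have p1: "p > 1"
    using prime_gt_1_nat[OF pr] .
  have "coeff (smult y S + [:0, poly S y:] + [:e:]) (p ^ j) ^ (p ^ (s - j)) =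
      (a j * y) ^ (p ^ (s - j)) + (if j = 0 then poly S y ^ (p ^ s) else 0)" if "j \<le> s" for j
  proof -
    have "coeff (smult y S + [:0, poly S y:] + [:e:]) (p ^ j) =
        a j * y + (if j = 0 then poly S y else 0)"
      using that p1 one_less_power[of p j]
      by (auto simp: S_def coeff_add_poly_power coeff_pCons' mult.commute)
    then show ?thesis
      using prime_gt_0_nat[OF pr] by (simp add: frobenius_add[OF ch pr])
  qed
  then have "tau p s (smult y S + [:0, poly S y:] + [:e:]) =
      (\<Sum>j\<le>s. (a j * y) ^ (p ^ (s - j))) + poly S y ^ (p ^ s)"
    by (simp add: tau_def sum.distrib)
  also have "poly S y ^ (p ^ s) = (\<Sum>j\<le>s. a j ^ (p ^ s) * y ^ (p ^ (s + j)))"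
    by (simp add: S_def poly_add_poly frobenius_sum[OF ch pr] power_mult_distrib power_add
        mult.commute flip: power_mult)
  finally show ?thesis
    using poly_Ad[of a s p y, OF assms(3)] by (simp add: sum.distrib power_mult_distrib add.commute)
qed

lemma poly_Ad_eq_0_if_translate_in_wp:
  fixes y c :: "'k::field"
  assumes ch: "CHAR('k) = p" and pr: "prime p" and "s \<ge> 1" and "a s \<noteq> 0"
    and "pcompose ([:0, 1:] * add_poly p a s + [:0, c:]) [:y, 1:] -
           ([:0, 1:] * add_poly p a s + [:0, c:]) = wp p P"
  shows "poly (Ad p a s) y = 0"
proof -
  define S where "S = add_poly p a s"
  define h where "h = smult y S + [:0, poly S y:] + [:y * poly S y + c * y:]"
  have h: "h = wp p P"
    using assms(5) translate_difference_formula[OF pcompose_add_poly_linear[OF ch pr]]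
    by (simp add: h_def S_def)
  have "degree [:0, poly S y:] \<le> p ^ s"
    using prime_gt_0_nat[OF pr] by (simp add: Suc_leI)
  then have "degree h \<le> p ^ s"
    unfolding h_def S_def using degree_add_poly_le[of p a s] prime_gt_0_nat[OF pr]
    by (intro degree_add_le) (auto intro: order_trans[OF degree_smult_le])
  then have "coeff P (p ^ s) = 0"
    using degree_less_if_degree_wp_le[OF pr assms(3)] h by (metis coeff_eq_0)
  then have "a s * poly (Ad p a s) y = 0"
    using tau_wp[OF ch pr, of s P] tau_translate_difference[where a = a and s = s, OF ch pr assms(4)]
    by (simp add: h_def S_def flip: h)
  then show ?thesis
    using assms(4) by simp
qed

lemma coeff_Ad:
  "coeff (Ad p a s) m = (1 / a s) *
     (\<Sum>i\<le>s. (if m = p ^ (s + i) then a i ^ (p ^ s) else 0) +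
              (if m = p ^ (s - i) then a i ^ (p ^ (s - i)) else 0))"
  unfolding Ad_def by (auto simp: coeff_sum intro!: sum.cong arg_cong[where f = "(*) _"])

lemma coeff_Ad_high:
  assumes "p > 1" and "1 \<le> j" "j \<le> s"
  shows "coeff (Ad p a s) (p ^ (s + j)) = a j ^ (p ^ s) / a s"
proof -
  have "(\<Sum>i\<le>s. (if p ^ (s + j) = p ^ (s + i) then a i ^ (p ^ s) else 0) +
                (if p ^ (s + j) = p ^ (s - i) then a i ^ (p ^ (s - i)) else 0))
      = (\<Sum>i\<le>s. if i = j then a i ^ (p ^ s) else 0)"
    using assms by (intro sum.cong refl) auto
  then show ?thesis
    using assms by (simp add: coeff_Ad)
qed

lemma coeff_Ad_low:
  assumes "p > 1" and "1 \<le> j" "j \<le> s"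
  shows "coeff (Ad p a s) (p ^ (s - j)) = a j ^ (p ^ (s - j)) / a s"
proof -
  have "(\<Sum>i\<le>s. (if p ^ (s - j) = p ^ (s + i) then a i ^ (p ^ s) else 0) +
                (if p ^ (s - j) = p ^ (s - i) then a i ^ (p ^ (s - i)) else 0))
      = (\<Sum>i\<le>s. if i = j then a i ^ (p ^ (s - i)) else 0)"
    using assms by (intro sum.cong refl) auto
  then show ?thesis
    using assms by (simp add: coeff_Ad)
qed

lemma coeff_Ad_middle:
  assumes "p > 1"
  shows "coeff (Ad p a s) (p ^ s) = 2 * a 0 ^ (p ^ s) / a s"
proof -
  have "(\<Sum>i\<le>s. (if p ^ s = p ^ (s + i) then a i ^ (p ^ s) else 0) +
                (if p ^ s = p ^ (s - i) then a i ^ (p ^ (s - i)) else 0))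
      = (\<Sum>i\<le>s. if i = 0 then 2 * a i ^ (p ^ s) else 0)"
    using assms by (intro sum.cong refl) auto
  then show ?thesis
    by (simp add: coeff_Ad)
qed

lemma degree_Ad_le:
  assumes "p > 0"
  shows "degree (Ad p a s) \<le> p ^ (2 * s)"
proof -
  have monom_le: "degree (monom c (p ^ m)) \<le> p ^ (2 * s)" if "m \<le> 2 * s" for c :: 'a and m
  proof -
    have "p ^ m \<le> p ^ (2 * s)"
      using assms that by (simp add: power_increasing)
    then show ?thesis
      using degree_monom_le order_trans by blast
  qed
  show ?thesis
    unfolding Ad_def
  proof (rule order_trans[OF degree_smult_le], rule degree_sum_le)
    fix i assume "i \<in> {..s}"
    then show "degree (monom (a i ^ p ^ s) (p ^ (s + i)) + monom (a i ^ p ^ (s - i)) (p ^ (s - i)))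
        \<le> p ^ (2 * s)"
      by (intro degree_add_le monom_le) auto
  qed simp
qed

lemma poly_eq_if_vanish_on_card_degree:
  fixes A B :: "'k::field poly"
  assumes "degree A \<le> card V" "degree B \<le> card V"
    and "\<And>x. x \<in> V \<Longrightarrow> poly A x = 0" "\<And>x. x \<in> V \<Longrightarrow> poly B x = 0"
    and "coeff A m = coeff B m" "coeff A m \<noteq> 0"
  shows "A = B"
proof -
  define D where "D = card V"
  have "smult (coeff B D) A - smult (coeff A D) B = 0"
    using assms unfolding D_def
    by (intro poly_eqI_degree_lead_coeff[where n = D and A = V])
       (auto simp: D_def mult.commute intro: order_trans[OF degree_diff_le] order_trans[OF degree_smult_le])
  then have "coeff B D * coeff A m = coeff A D * coeff B m"
    by (metis coeff_smult eq_iff_diff_eq_0)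
  then have "coeff A D = coeff B D"
    using assms(5,6) by simp
  then show ?thesis
    using assms by (intro poly_eqI_degree_lead_coeff[where n = D and A = V]) (simp_all add: D_def)
qed

lemma coeff_Ad_1:
  assumes "p > 1" "s \<ge> 1" "a s \<noteq> 0"
  shows "coeff (Ad p a s) 1 = 1"
  using coeff_Ad_low[OF assms(1,2) order.refl, of a] assms(3) by simp

lemma card_roots_Ad_le:
  assumes "p > 1" "s \<ge> 1" "a s \<noteq> 0"
  shows "card {x. poly (Ad p a s) x = 0} \<le> p ^ (2 * s)"
proof -
  have "Ad p a s \<noteq> 0"
    using coeff_Ad_1[where a = a, OF assms] by auto
  then show ?thesis
    using card_poly_roots_bound degree_Ad_le[of p a s] assms(1) order_trans by fastforce
qed

(* For p = 2 the coefficient 2 a_0^(p^s) of X^(p^s) in Ad vanishes and carries no information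
   about a_0, hence the extra hypothesis (reducedness gives a_0 = 0 there). *)
lemma Ad_eq_imp_proportional:
  fixes a b :: "nat \<Rightarrow> 'k::field"
  assumes ch: "CHAR('k) = p" and pr: "prime p" and "s \<ge> 1" and as: "a s \<noteq> 0" and bs: "b s \<noteq> 0"
    and Ad_eq: "Ad p a s = Ad p b s" and p2: "p = 2 \<Longrightarrow> a 0 = 0 \<and> b 0 = 0"
  defines "\<gamma> \<equiv> a s / b s"
  shows "\<gamma> \<in> Fq (p ^ s)"
    and "\<And>j. j \<le> s \<Longrightarrow> a j = \<gamma> * b j"
    and "\<And>j. j \<le> s \<Longrightarrow> b j \<noteq> 0 \<Longrightarrow> \<gamma> \<in> Fq (p ^ (s - j))"
proof -
  have p1: "p > 1"
    using prime_gt_1_nat[OF pr] .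
  have high: "a j ^ (p ^ s) / a s = b j ^ (p ^ s) / b s" if "j \<le> s" for j
  proof (cases "j = 0")
    case True
    have "(2 :: 'k) \<noteq> 0 \<or> p = 2"
      using ch pr of_nat_eq_0_iff_char_dvd[of 2] primes_dvd_imp_eq[of p 2] by auto
    then show ?thesis
      using coeff_Ad_middle[OF p1, of a s] coeff_Ad_middle[OF p1, of b s] Ad_eq p2 True p1
      by (auto simp: zero_power simp flip: times_divide_eq_right)
  next
    case False
    then show ?thesis
      using coeff_Ad_high[OF p1, of j s] Ad_eq that by (metis less_one not_less)
  qed
  show \<gamma>: "\<gamma> \<in> Fq (p ^ s)"
    using high[OF order.refl] as bs by (simp add: Fq_def \<gamma>_def field_simps)
  show proportional: "a j = \<gamma> * b j" if "j \<le> s" for j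
  proof -
    have "a j ^ (p ^ s) = \<gamma> * b j ^ (p ^ s)"
      using high[OF that] as bs by (simp add: \<gamma>_def field_simps)
    also have "\<dots> = (\<gamma> * b j) ^ (p ^ s)"
      using \<gamma> by (simp add: Fq_def power_mult_distrib)
    finally show ?thesis
      by (simp add: frobenius_inject[OF ch pr])
  qed
  show "\<gamma> \<in> Fq (p ^ (s - j))" if "j \<le> s" "b j \<noteq> 0" for j
  proof (cases "j = 0")
    case False
    then have "a j ^ (p ^ (s - j)) / a s = b j ^ (p ^ (s - j)) / b s"
      using coeff_Ad_low[OF p1, of j s a] coeff_Ad_low[OF p1, of j s b] Ad_eq that(1) by simp
    then have "(\<gamma> * b j) ^ (p ^ (s - j)) / a s = b j ^ (p ^ (s - j)) / b s"
      using proportional[OF that(1)] by simp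
    then show ?thesis
      using that(2) as bs by (simp add: Fq_def \<gamma>_def field_simps)
  qed (use \<gamma> in simp)
qed

section \<open>The basis of the big action\<close>

locale big_action_basis =
  fixes p n :: nat and V :: "'k::field set" and f :: "nat \<Rightarrow> 'k poly"
    and s :: "nat \<Rightarrow> nat" and a :: "nat \<Rightarrow> nat \<Rightarrow> 'k" and c :: "nat \<Rightarrow> 'k"
  assumes prime_p: "prime p" and char_p: "CHAR('k) = p" and n_ge2: "n \<ge> 2"
    and finite_V: "finite V" and card_V: "card V = p ^ (2 * s n)"
    and reduced_f: "\<And>i. i \<in> {1..n} \<Longrightarrow> reduced p (f i)"
    and deg_cls_mono: "\<And>i j. i \<in> {1..n} \<Longrightarrow> j \<in> {1..n} \<Longrightarrow> i \<le> j \<Longrightarrow>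
                   deg_cls p (f i) \<le> deg_cls p (f j)"
    and deg_cls_combination: "\<And>lam :: nat \<Rightarrow> nat. (\<forall>i\<in>{1..n}. lam i < p) \<Longrightarrow> (\<exists>i\<in>{1..n}. lam i \<noteq> 0) \<Longrightarrow>
                   deg_cls p (\<Sum>i\<in>{1..n}. smult (of_nat (lam i)) (f i)) =
                   Max ((\<lambda>i. deg_cls p (smult (of_nat (lam i)) (f i))) ` {1..n})"
    and translate_in_wp: "\<And>i y. i \<in> {1..n} \<Longrightarrow> y \<in> V \<Longrightarrow>
                   \<exists>P. pcompose (f i) [:y, 1:] - f i = wp p P"
    and s_ge1: "\<And>i. i \<in> {1..n} \<Longrightarrow> s i \<ge> 1"
    and a_lead: "\<And>i. i \<in> {1..n} \<Longrightarrow> a i (s i) \<noteq> 0"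
    and f_shape: "\<And>i. i \<in> {1..n} \<Longrightarrow> f i = [:0, 1:] * add_poly p (a i) (s i) + [:0, c i:]"
begin

lemma p_gt_1: "p > 1"
  using prime_gt_1_nat[OF prime_p] .

lemma one_mem: "1 \<in> {1..n}" and n_mem: "n \<in> {1..n}"
  using n_ge2 by auto

lemma deg_cls_f:
  assumes "i \<in> {1..n}"
  shows "deg_cls p (f i) = p ^ s i + 1"
  using deg_cls_reduced[OF prime_p reduced_f[OF assms]]
    degree_shifted_add_poly[where a = "a i", OF p_gt_1 a_lead[OF assms]] f_shape[OF assms]
  by simp

lemma s_le_s_n: "i \<in> {1..n} \<Longrightarrow> s i \<le> s n"
  using deg_cls_mono[of i n] deg_cls_f n_mem p_gt_1 by simp

lemma V_subset_roots_Ad: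
  assumes "i \<in> {1..n}"
  shows "V \<subseteq> {x. poly (Ad p (a i) (s i)) x = 0}"
  using poly_Ad_eq_0_if_translate_in_wp[where a = "a i", OF char_p prime_p s_ge1[OF assms] a_lead[OF assms]]
    translate_in_wp[OF assms] f_shape[OF assms]
  by fastforce

lemma card_V_le:
  assumes "i \<in> {1..n}"
  shows "card V \<le> p ^ (2 * s i)"
proof -
  have "Ad p (a i) (s i) \<noteq> 0"
    using coeff_Ad_1[where a = "a i", OF p_gt_1 s_ge1[OF assms] a_lead[OF assms]] by auto
  then show ?thesis
    using card_mono[OF poly_roots_finite V_subset_roots_Ad[OF assms]]
      card_roots_Ad_le[where a = "a i", OF p_gt_1 s_ge1[OF assms] a_lead[OF assms]]
    by linarith
qed

lemma s_eq_s_n: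
  assumes "i \<in> {1..n}"
  shows "s i = s n"
proof -
  have "p ^ (2 * s n) \<le> p ^ (2 * s i)"
    using card_V_le[OF assms] card_V by simp
  then have "s n \<le> s i"
    using p_gt_1 by simp
  then show ?thesis
    using s_le_s_n[OF assms] by simp
qed

lemma s_eq: "i \<in> {1..n} \<Longrightarrow> s i = s 1"
  using s_eq_s_n one_mem by metis

lemma V_eq_roots_Ad: "V = {x. poly (Ad p (a 1) (s 1)) x = 0}"
proof (rule card_seteq)
  have "Ad p (a 1) (s 1) \<noteq> 0"
    using coeff_Ad_1[where a = "a 1", OF p_gt_1 s_ge1[OF one_mem] a_lead[OF one_mem]] by auto
  then show "finite {x. poly (Ad p (a 1) (s 1)) x = 0}"
    by (rule poly_roots_finite)
  show "V \<subseteq> {x. poly (Ad p (a 1) (s 1)) x = 0}"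
    using V_subset_roots_Ad[OF one_mem] .
  show "card {x. poly (Ad p (a 1) (s 1)) x = 0} \<le> card V"
    using card_roots_Ad_le[where a = "a 1", OF p_gt_1 s_ge1[OF one_mem] a_lead[OF one_mem]]
      card_V s_eq[OF n_mem] by simp
qed

lemma Ad_eq:
  assumes "i \<in> {1..n}"
  shows "Ad p (a i) (s 1) = Ad p (a 1) (s 1)"
proof (rule poly_eq_if_vanish_on_card_degree)
  show "degree (Ad p (a i) (s 1)) \<le> card V" "degree (Ad p (a 1) (s 1)) \<le> card V"
    using degree_Ad_le[of p _ "s 1"] p_gt_1 card_V s_eq[OF n_mem] by simp_all
  show "coeff (Ad p (a i) (s 1)) 1 = coeff (Ad p (a 1) (s 1)) 1" "coeff (Ad p (a i) (s 1)) 1 \<noteq> 0"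
    using coeff_Ad_1[where a = "a i", OF p_gt_1 s_ge1[OF assms] a_lead[OF assms]]
      coeff_Ad_1[where a = "a 1", OF p_gt_1 s_ge1[OF one_mem] a_lead[OF one_mem]] s_eq[OF assms]
    by simp_all
  show "poly (Ad p (a i) (s 1)) x = 0" "poly (Ad p (a 1) (s 1)) x = 0" if "x \<in> V" for x
    using V_subset_roots_Ad[OF assms] V_subset_roots_Ad[OF one_mem] s_eq[OF assms] that by auto
qed

lemma a_0_eq_0_if_p_2:
  assumes "i \<in> {1..n}" and "p = 2"
  shows "a i 0 = 0"
proof -
  have "coeff (f i) 2 = 0"
    using reduced_f[OF assms(1)] assms(2) by (simp add: reduced_def)
  moreover have "coeff (f i) 2 = coeff (add_poly p (a i) (s i)) (p ^ 0)"
    by (simp add: f_shape[OF assms(1)] numeral_2_eq_2)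
  ultimately show ?thesis
    using coeff_add_poly_power[OF p_gt_1, of "a i" "s i" 0] by simp
qed

definition \<gamma> :: "nat \<Rightarrow> 'k" where
  "\<gamma> i = a i (s 1) / a 1 (s 1)"

lemma \<gamma>_1: "\<gamma> 1 = 1"
  using a_lead[OF one_mem] by (simp add: \<gamma>_def)

lemma
  assumes "i \<in> {1..n}"
  shows \<gamma>_mem_Fq: "\<gamma> i \<in> Fq (p ^ s 1)"
    and a_eq_\<gamma>: "\<And>j. j \<le> s 1 \<Longrightarrow> a i j = \<gamma> i * a 1 j"
    and \<gamma>_mem_Fq_diff: "\<And>j. j \<le> s 1 \<Longrightarrow> a 1 j \<noteq> 0 \<Longrightarrow> \<gamma> i \<in> Fq (p ^ (s 1 - j))"
proof -
  have "a i (s 1) \<noteq> 0"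
    using a_lead[OF assms] s_eq[OF assms] by simp
  note proportional = Ad_eq_imp_proportional[OF char_p prime_p s_ge1[OF one_mem] this
      a_lead[OF one_mem] Ad_eq[OF assms]]
  have "p = 2 \<Longrightarrow> a i 0 = 0 \<and> a 1 0 = 0"
    using a_0_eq_0_if_p_2 assms one_mem by blast
  from proportional[OF this] show "\<gamma> i \<in> Fq (p ^ s 1)"
    and "\<And>j. j \<le> s 1 \<Longrightarrow> a i j = \<gamma> i * a 1 j"
    and "\<And>j. j \<le> s 1 \<Longrightarrow> a 1 j \<noteq> 0 \<Longrightarrow> \<gamma> i \<in> Fq (p ^ (s 1 - j))"
    unfolding \<gamma>_def by blast+
qed

lemma add_poly_eq_smult_\<gamma>:
  assumes "i \<in> {1..n}"
  shows "add_poly p (a i) (s i) = smult (\<gamma> i) (add_poly p (a 1) (s 1))"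
  unfolding smult_add_poly s_eq[OF assms] by (rule add_poly_cong) (rule a_eq_\<gamma>[OF assms])

lemma f_eq_smult_\<gamma>:
  assumes "i \<in> {1..n}"
  shows "f i = smult (\<gamma> i) ([:0, 1:] * add_poly p (a 1) (s 1)) + smult (c i) [:0, 1:]"
  using f_shape[OF assms] add_poly_eq_smult_\<gamma>[OF assms] by simp

lemma \<gamma>_independent:
  assumes lam_lt: "\<forall>i\<in>{1..n}. lam i < p"
    and lam_sum: "of_nat (lam 1) + (\<Sum>i\<in>{2..n}. of_nat (lam i) * \<gamma> i) = (0 :: 'k)"
    and i0: "i0 \<in> {1..n}"
  shows "lam i0 = 0"
proof (rule ccontr)
  assume "lam i0 \<noteq> 0"
  have "{1..n} = insert 1 {2..n}"
    using n_ge2 by auto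
  then have sum_\<gamma>: "(\<Sum>i\<in>{1..n}. of_nat (lam i) * \<gamma> i) = (0 :: 'k)"
    using lam_sum \<gamma>_1 by simp
  have "(\<Sum>i\<in>{1..n}. smult (of_nat (lam i)) (f i)) =
      (\<Sum>i\<in>{1..n}. smult (of_nat (lam i) * \<gamma> i) ([:0, 1:] * add_poly p (a 1) (s 1)) +
                     smult (of_nat (lam i) * c i) [:0, 1:])"
    by (rule sum.cong) (simp_all add: f_eq_smult_\<gamma> smult_add_right)
  also have "\<dots> = smult (\<Sum>i\<in>{1..n}. of_nat (lam i) * \<gamma> i) ([:0, 1:] * add_poly p (a 1) (s 1)) +
      smult (\<Sum>i\<in>{1..n}. of_nat (lam i) * c i) [:0, 1:]"
    by (simp only: sum.distrib smult_sum)
  finally have "(\<Sum>i\<in>{1..n}. smult (of_nat (lam i)) (f i)) =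
      smult (\<Sum>i\<in>{1..n}. of_nat (lam i) * c i) [:0, 1:]"
    by (simp only: sum_\<gamma> smult_0_left add_0_left)
  moreover have "degree (smult x [:0, 1:]) \<le> 1" for x :: 'k
    using degree_smult_le[of x "[:0, 1:]"] by simp
  ultimately have "deg_cls p (\<Sum>i\<in>{1..n}. smult (of_nat (lam i)) (f i)) \<le> 1"
    using deg_cls_le_degree[OF prime_p] order_trans by metis
  moreover have "(of_nat (lam i0) :: 'k) \<noteq> 0"
    using \<open>lam i0 \<noteq> 0\<close> lam_lt i0 char_p by (auto simp: of_nat_eq_0_iff_char_dvd dest: nat_dvd_not_less)
  then have "deg_cls p (smult (of_nat (lam i0)) (f i0)) = p ^ s i0 + 1"
    using deg_cls_f[OF i0] deg_cls_reduced[OF prime_p] reduced_f[OF i0] reduced_smult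
    by (metis degree_smult_eq)
  moreover have "\<exists>i\<in>{1..n}. lam i \<noteq> 0"
    using \<open>lam i0 \<noteq> 0\<close> i0 by blast
  then have "deg_cls p (\<Sum>i\<in>{1..n}. smult (of_nat (lam i)) (f i)) =
      Max ((\<lambda>i. deg_cls p (smult (of_nat (lam i)) (f i))) ` {1..n})"
    by (rule deg_cls_combination[OF lam_lt])
  moreover have "deg_cls p (smult (of_nat (lam i0)) (f i0)) \<le>
      Max ((\<lambda>i. deg_cls p (smult (of_nat (lam i)) (f i))) ` {1..n})"
    using i0 by (intro Max_ge) auto
  ultimately show False
    using p_gt_1 zero_less_power[of p "s i0"] by linarith
qed

lemma \<gamma>_not_mem_Fp:
  assumes i: "i \<in> {2..n}"
  shows "\<gamma> i \<notin> Fq p"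
proof
  assume "\<gamma> i \<in> Fq p"
  then obtain m where m: "m < p" "\<gamma> i = of_nat m"
    using Fq_prime[OF char_p prime_p] by auto
  define lam where "lam j = (if j = 1 then (p - m) mod p else if j = i then 1 else 0)" for j
  have "i \<noteq> 1"
    using i by auto
  have "(\<Sum>j\<in>{2..n}. of_nat (lam j) * \<gamma> j) = \<gamma> i"
    using i \<open>i \<noteq> 1\<close> by (simp add: lam_def if_distrib[of "\<lambda>x. of_nat x * _"] cong: if_cong)
  moreover have "p dvd (p - m) mod p + m"
    using m(1) by (metis add.commute le_add_diff_inverse less_imp_le_nat mod_add_right_eq mod_self dvd_eq_mod_eq_0)
  then have "of_nat ((p - m) mod p) + \<gamma> i = (0 :: 'k)"
    using m(2) char_p by (simp add: of_nat_eq_0_iff_char_dvd flip: of_nat_add)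
  ultimately have "of_nat (lam 1) + (\<Sum>j\<in>{2..n}. of_nat (lam j) * \<gamma> j) = (0 :: 'k)"
    by (simp add: lam_def)
  moreover have "\<forall>j\<in>{1..n}. lam j < p"
    using p_gt_1 by (simp add: lam_def)
  ultimately have "lam i = 0"
    using \<gamma>_independent i by simp
  then show False
    using \<open>i \<noteq> 1\<close> by (simp add: lam_def)
qed

lemma exists_subfield_containing_\<gamma>:
  "\<exists>d\<ge>2. d dvd s 1 \<and> (\<forall>i\<in>{2..n}. \<gamma> i \<in> Fq (p ^ d) - Fq p) \<and>
     (\<forall>j\<le>s 1. \<not> d dvd j \<longrightarrow> a 1 j = 0)"
proof -
  obtain d where d: "d > 0" "d dvd s 1" "\<gamma> ` {1..n} \<subseteq> Fq (p ^ d)"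
      "\<forall>j\<le>s 1. \<not> d dvd j \<longrightarrow> a 1 j = 0"
    using exists_subfield_dividing_support[OF s_ge1[OF one_mem], of "\<gamma> ` {1..n}" p "a 1"]
      \<gamma>_mem_Fq \<gamma>_mem_Fq_diff
    by blast
  have "\<gamma> 2 \<in> Fq (p ^ d)"
    using d(3) n_ge2 by auto
  then have "d \<noteq> 1"
    using \<gamma>_not_mem_Fp[of 2] n_ge2 by auto
  moreover have "\<forall>i\<in>{2..n}. \<gamma> i \<in> Fq (p ^ d) - Fq p"
    using d(3) \<gamma>_not_mem_Fp by auto
  ultimately show ?thesis
    using d(1,2,4) by (intro exI[of _ d]) auto
qed

end

theorem proposition4p2:
  fixes p n v :: nat
    and f :: "nat \<Rightarrow> 'k::field poly"
    and V :: "'k set"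
    and s :: "nat \<Rightarrow> nat"
    and a :: "nat \<Rightarrow> nat \<Rightarrow> 'k"
    and c :: "nat \<Rightarrow> 'k"
  assumes k_closed: "alg_closed TYPE('k)"
    and p_prime: "prime p"
    and char_p: "CHAR('k) = p"
    and n_ge2: "n \<ge> 2"
    \<comment> \<open>V is an F_p-subspace of k of dimension v\<close>
    and V_zero: "0 \<in> V"
    and V_add: "\<And>x y. x \<in> V \<Longrightarrow> y \<in> V \<Longrightarrow> x + y \<in> V"
    and V_fin: "finite V"
    and V_dim: "card V = p ^ v"
    \<comment> \<open>the f_i are reduced representatives of a basis with properties (a),(b),(c)\<close>
    and f_red: "\<And>i. i \<in> {1..n} \<Longrightarrow> reduced p (f i)"
    and cond_a: "\<And>i. i \<in> {1..n} \<Longrightarrow> \<not> p dvd deg_cls p (f i)"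
    and cond_b: "\<And>i j. i \<in> {1..n} \<Longrightarrow> j \<in> {1..n} \<Longrightarrow> i \<le> j \<Longrightarrow>
                   deg_cls p (f i) \<le> deg_cls p (f j)"
    and cond_c: "\<And>lam :: nat \<Rightarrow> nat. (\<forall>i\<in>{1..n}. lam i < p) \<Longrightarrow> (\<exists>i\<in>{1..n}. lam i \<noteq> 0) \<Longrightarrow>
                   deg_cls p (\<Sum>i\<in>{1..n}. smult (of_nat (lam i)) (f i)) =
                   Max ((\<lambda>i. deg_cls p (smult (of_nat (lam i)) (f i))) ` {1..n})"
    \<comment> \<open>translation invariance modulo wp(k[X])\<close>
    and transl: "\<And>i y. i \<in> {1..n} \<Longrightarrow> y \<in> V \<Longrightarrow>
                   \<exists>P. pcompose (f i) [:y, 1:] - f i = wp p P"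
    \<comment> \<open>the resulting shape f_i = X S_i(X) + c_i X\<close>
    and s_ge1: "\<And>i. i \<in> {1..n} \<Longrightarrow> s i \<ge> 1"
    and a_lead: "\<And>i. i \<in> {1..n} \<Longrightarrow> a i (s i) \<noteq> 0"
    and f_shape: "\<And>i. i \<in> {1..n} \<Longrightarrow>
                   f i = [:0, 1:] * add_poly p (a i) (s i) + [:0, c i:]"
    and v_eq: "v = 2 * s n"
  shows "(\<forall>i\<in>{1..n}. s i = s 1)
       \<and> V = {x. poly (Ad p (a 1) (s 1)) x = 0}
       \<and> (\<exists>d (\<gamma> :: nat \<Rightarrow> 'k). d > 0 \<and> d dvd s 1
            \<and> (\<forall>i\<in>{2..n}. \<gamma> i \<in> Fq (p ^ d) - Fq p)
            \<and> (\<forall>j\<le>s 1. \<not> d dvd j \<longrightarrow> a 1 j = 0)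
            \<and> (\<forall>i\<in>{2..n}. add_poly p (a i) (s i) = smult (\<gamma> i) (add_poly p (a 1) (s 1)))
            \<and> (\<forall>lam :: nat \<Rightarrow> nat. (\<forall>i\<in>{1..n}. lam i < p) \<longrightarrow>
                 of_nat (lam 1) + (\<Sum>i\<in>{2..n}. of_nat (lam i) * \<gamma> i) = (0::'k) \<longrightarrow>
                 (\<forall>i\<in>{1..n}. lam i = 0)))
       \<and> s 1 \<ge> 2"
proof -
  interpret big_action_basis p n V f s a c
    using p_prime char_p n_ge2 V_fin V_dim f_red cond_b cond_c transl s_ge1 a_lead f_shape v_eq
    by unfold_locales auto
  obtain d where d: "d \<ge> 2" "d dvd s 1" "\<forall>i\<in>{2..n}. \<gamma> i \<in> Fq (p ^ d) - Fq p"
      "\<forall>j\<le>s 1. \<not> d dvd j \<longrightarrow> a 1 j = 0"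
    using exists_subfield_containing_\<gamma> by blast
  have "s 1 \<ge> 2"
    using d(1,2) s_ge1[OF one_mem] dvd_imp_le[of d "s 1"] by linarith
  moreover have "\<forall>i\<in>{2..n}. add_poly p (a i) (s i) = smult (\<gamma> i) (add_poly p (a 1) (s 1))"
    by (intro ballI add_poly_eq_smult_\<gamma>) simp
  moreover have "\<forall>lam :: nat \<Rightarrow> nat. (\<forall>i\<in>{1..n}. lam i < p) \<longrightarrow>
      of_nat (lam 1) + (\<Sum>i\<in>{2..n}. of_nat (lam i) * \<gamma> i) = (0::'k) \<longrightarrow> (\<forall>i\<in>{1..n}. lam i = 0)"
    using \<gamma>_independent by blast
  moreover have "\<forall>i\<in>{1..n}. s i = s 1"
    using s_eq by blast
  ultimately show ?thesis
    using V_eq_roots_Ad d by (intro conjI exI[of _ d] exI[of _ \<gamma>]) (blast | linarith)+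
qed

end
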